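(* Let $\theta_+,\theta_-$ be anticommuting (Grassmann-odd) coordinates, let $\eta=\eta(x_+)$ be a fermionic (Grassmann-odd) function of $x_+$ and $\eta^\dagger=\eta^\dagger(x_-)$ its conjugate, a fermionic function of $x_-$, and set $T_1=\theta_+\eta$, $T_2=\theta_-\eta^\dagger$. Define the differential operator $$\mathcal{D}= iT_1\,\partial_+ + iT_2\,\partial_- - T_1T_2\,\partial_+\partial_- ,$$ where $\partial_\pm=\partial/\partial x_\pm$. Let $B(x_+,x_-)=(b_{jk})$ be an $M\times M$ matrix of bosonic (Grassmann-even) smooth functions of $(x_+,x_-)$, and let $(1+\mathcal{D})B$ denote the matrix with entries $(1+\mathcal{D})b_{jk}$. Then $$\det\big[(1+\mathcal{D})B(x_+,x_-)\big]=(1+\mathcal{D})\det\big[B(x_+,x_-)\big].$$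
   Context: Here $x_-$ is the complex conjugate variable of $x_+$. The quantities $T_1,T_2$ are products of two Grassmann-odd objects, hence Grassmann-even, commuting with everything, and satisfy $T_1^2=T_2^2=0$. *)

theory Defs
  imports "HOL-Analysis.Analysis"
begin

text \<open>Wirtinger derivatives: x_+ = z, x_- = cnj z, so
  d/dx_+ = (d/dx - i d/dy)/2 and d/dx_- = (d/dx + i d/dy)/2.\<close>

definition dplus :: "(complex \<Rightarrow> complex) \<Rightarrow> complex \<Rightarrow> complex" where
  "dplus f z = (frechet_derivative f (at z) 1 - \<i> * frechet_derivative f (at z) \<i>) / 2"

definition dminus :: "(complex \<Rightarrow> complex) \<Rightarrow> complex \<Rightarrow> complex" where
  "dminus f z = (frechet_derivative f (at z) 1 + \<i> * frechet_derivative f (at z) \<i>) / 2"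

definition iter_wirt :: "bool list \<Rightarrow> (complex \<Rightarrow> complex) \<Rightarrow> complex \<Rightarrow> complex" where
  "iter_wirt ops f = foldr (\<lambda>b g. if b then dplus g else dminus g) ops f"

definition smooth :: "(complex \<Rightarrow> complex) \<Rightarrow> bool" where
  "smooth f \<longleftrightarrow> (\<forall>ops. iter_wirt ops f differentiable_on UNIV)"

text \<open>Grassmann-even algebra: a commutative ring 'a with a ring embedding
  emb of the complex numbers. (1 + D) applied to a bosonic function f at the point
  x_+ = z, x_- = cnj z, where t1 = T_1(x_+), t2 = T_2(x_-).\<close>
definition onepD :: "(complex \<Rightarrow> 'a::comm_ring_1) \<Rightarrow> 'a \<Rightarrow> 'a \<Rightarrow> (complex \<Rightarrow> complex) \<Rightarrow> complex \<Rightarrow> 'a" where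
  "onepD emb t1 t2 f z =
     emb (f z) + emb \<i> * t1 * emb (dplus f z) + emb \<i> * t2 * emb (dminus f z)
     - t1 * t2 * emb (dplus (dminus f) z)"

end

theory Submission
  imports Defs
begin

text \<open>Since \<open>i\<^sup>2 = -1\<close>, the operator factors as
  \<open>1 + \<D> = (1 + i T\<^sub>1 \<partial>\<^sub>+)(1 + i T\<^sub>2 \<partial>\<^sub>-)\<close>, and because \<open>T\<^sub>1\<^sup>2 = T\<^sub>2\<^sup>2 = 0\<close> each factor is a
  truncated Taylor shift, hence multiplicative by the Leibniz rule. So \<open>1 + \<D>\<close> is a ring
  homomorphism from (sufficiently differentiable) functions into the Grassmann-even algebra,
  and it therefore commutes with the determinant, a polynomial with integer coefficients in
  the entries.\<close>

lemma frechet_derivative_mult_at: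
  fixes f g :: "'a::real_normed_vector \<Rightarrow> 'b::real_normed_algebra"
  assumes "f differentiable at z" "g differentiable at z"
  shows "frechet_derivative (\<lambda>w. f w * g w) (at z) h
       = f z * frechet_derivative g (at z) h + frechet_derivative f (at z) h * g z"
proof -
  have "((\<lambda>w. f w * g w) has_derivative
     (\<lambda>h. f z * frechet_derivative g (at z) h + frechet_derivative f (at z) h * g z)) (at z)"
    by (rule has_derivative_mult; use assms frechet_derivative_works in blast)
  from frechet_derivative_at[OF this] show ?thesis by metis
qed

lemma frechet_derivative_add_at:
  fixes f g :: "'a::real_normed_vector \<Rightarrow> 'b::real_normed_vector"
  assumes "f differentiable at z" "g differentiable at z"
  shows "frechet_derivative (\<lambda>w. f w + g w) (at z) h
       = frechet_derivative f (at z) h + frechet_derivative g (at z) h"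
proof -
  have "((\<lambda>w. f w + g w) has_derivative
     (\<lambda>h. frechet_derivative f (at z) h + frechet_derivative g (at z) h)) (at z)"
    using has_derivative_add assms frechet_derivative_works by blast
  from frechet_derivative_at[OF this] show ?thesis by metis
qed

lemma dplus_mult:
  "f differentiable at z \<Longrightarrow> g differentiable at z \<Longrightarrow>
   dplus (\<lambda>w. f w * g w) z = dplus f z * g z + f z * dplus g z"
  unfolding dplus_def by (simp add: frechet_derivative_mult_at field_simps)

lemma dminus_mult:
  "f differentiable at z \<Longrightarrow> g differentiable at z \<Longrightarrow>
   dminus (\<lambda>w. f w * g w) z = dminus f z * g z + f z * dminus g z"
  unfolding dminus_def by (simp add: frechet_derivative_mult_at field_simps)

lemma dplus_add:
  "f differentiable at z \<Longrightarrow> g differentiable at z \<Longrightarrow>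
   dplus (\<lambda>w. f w + g w) z = dplus f z + dplus g z"
  unfolding dplus_def by (simp add: frechet_derivative_add_at field_simps)

lemma dminus_add:
  "f differentiable at z \<Longrightarrow> g differentiable at z \<Longrightarrow>
   dminus (\<lambda>w. f w + g w) z = dminus f z + dminus g z"
  unfolding dminus_def by (simp add: frechet_derivative_add_at field_simps)

lemma dplus_const [simp]: "dplus (\<lambda>w. c) z = 0"
  by (simp add: dplus_def)

lemma dminus_const_fun [simp]: "dminus (\<lambda>w. c) = (\<lambda>w. 0)"
  by (simp add: dminus_def fun_eq_iff)

text \<open>The regularity under which the product rule may be applied to all terms of \<open>1 + \<D>\<close>,
  including the mixed derivative \<open>\<partial>\<^sub>+\<partial>\<^sub>- f\<close>.\<close>

definition onepD_regular :: "(complex \<Rightarrow> complex) \<Rightarrow> bool" where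
  "onepD_regular f \<longleftrightarrow> (\<forall>x. f differentiable at x) \<and> (\<forall>x. dminus f differentiable at x)"

lemma smooth_imp_onepD_regular:
  assumes "smooth f"
  shows "onepD_regular f"
proof -
  from assms have "iter_wirt [] f differentiable_on UNIV" "iter_wirt [False] f differentiable_on UNIV"
    unfolding smooth_def by blast+
  then show ?thesis
    unfolding onepD_regular_def iter_wirt_def by (simp add: differentiable_on_def)
qed

lemma dminus_mult_fun:
  "onepD_regular f \<Longrightarrow> onepD_regular g \<Longrightarrow>
   dminus (\<lambda>w. f w * g w) = (\<lambda>w. dminus f w * g w + f w * dminus g w)"
  by (auto simp: onepD_regular_def fun_eq_iff dminus_mult)

lemma dminus_add_fun:
  "onepD_regular f \<Longrightarrow> onepD_regular g \<Longrightarrow>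
   dminus (\<lambda>w. f w + g w) = (\<lambda>w. dminus f w + dminus g w)"
  by (auto simp: onepD_regular_def fun_eq_iff dminus_add)

lemma onepD_regular_mult:
  "onepD_regular f \<Longrightarrow> onepD_regular g \<Longrightarrow> onepD_regular (\<lambda>w. f w * g w)"
  unfolding onepD_regular_def by (simp add: dminus_mult_fun[unfolded onepD_regular_def])

lemma onepD_regular_add:
  "onepD_regular f \<Longrightarrow> onepD_regular g \<Longrightarrow> onepD_regular (\<lambda>w. f w + g w)"
  unfolding onepD_regular_def by (simp add: dminus_add_fun[unfolded onepD_regular_def])

lemma onepD_regular_const: "onepD_regular (\<lambda>w. c)"
  by (simp add: onepD_regular_def)

lemma onepD_regular_sum:
  "finite S \<Longrightarrow> (\<And>i. i \<in> S \<Longrightarrow> onepD_regular (h i)) \<Longrightarrow>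
   onepD_regular (\<lambda>w. \<Sum>i\<in>S. h i w)"
  by (induction S rule: finite_induct) (auto intro: onepD_regular_add onepD_regular_const)

lemma onepD_regular_prod:
  "finite S \<Longrightarrow> (\<And>i. i \<in> S \<Longrightarrow> onepD_regular (h i)) \<Longrightarrow>
   onepD_regular (\<lambda>w. \<Prod>i\<in>S. h i w)"
  by (induction S rule: finite_induct) (auto intro: onepD_regular_mult onepD_regular_const)

lemma truncated_leibniz_identity:
  fixes t1 t2 I F Fp Fm Fpm G Gp Gm Gpm :: "'a::comm_ring_1"
  assumes "t1 * t1 = 0" "t2 * t2 = 0" "I * I = -1"
  shows "(F + I*t1*Fp + I*t2*Fm - t1*t2*Fpm) * (G + I*t1*Gp + I*t2*Gm - t1*t2*Gpm)
       = F*G + I*t1*(Fp*G + F*Gp) + I*t2*(Fm*G + F*Gm)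
         - t1*t2*((Fpm*G + Fm*Gp) + (Fp*Gm + F*Gpm))"
proof -
  have "(F + I*t1*Fp + I*t2*Fm - t1*t2*Fpm) * (G + I*t1*Gp + I*t2*Gm - t1*t2*Gpm)
    = (F*G + I*t1*(Fp*G + F*Gp) + I*t2*(Fm*G + F*Gm)
       - t1*t2*((Fpm*G + Fm*Gp) + (Fp*Gm + F*Gpm)))
     + (t1*t1) * (I*I*Fp*Gp - I*t2*(Fp*Gpm + Fpm*Gp) + t2*t2*Fpm*Gpm)
     + (t2*t2) * (I*I*Fm*Gm - I*t1*(Fm*Gpm + Fpm*Gm))
     + (I*I + 1) * (t1*t2*(Fp*Gm + Fm*Gp))"
    by (simp add: algebra_simps)
  then show ?thesis using assms by simp
qed

locale grassmann_even_data =
  fixes emb :: "complex \<Rightarrow> 'a::comm_ring_1" and t1 t2 :: 'a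
  assumes emb_1: "emb 1 = 1"
    and emb_add: "\<And>a b. emb (a + b) = emb a + emb b"
    and emb_mult: "\<And>a b. emb (a * b) = emb a * emb b"
    and t1_nil: "t1 * t1 = 0"
    and t2_nil: "t2 * t2 = 0"
begin

lemma emb_0: "emb 0 = 0"
  using emb_add[of 0 0] by simp

lemma emb_diff: "emb (a - b) = emb a - emb b"
  using emb_add[of "a - b" b] by (simp add: eq_diff_eq)

lemma emb_of_int: "emb (of_int k) = of_int k"
  by (induction k rule: int_induct[of _ 0]) (simp_all add: emb_0 emb_add emb_diff emb_1)

lemma emb_i_squared: "emb \<i> * emb \<i> = -1"
  using emb_mult[of \<i> \<i>] emb_diff[of 0 1] by (simp add: emb_0 emb_1)

abbreviation P :: "(complex \<Rightarrow> complex) \<Rightarrow> complex \<Rightarrow> 'a" where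
  "P \<equiv> onepD emb t1 t2"

lemma onepD_const: "P (\<lambda>w. c) z = emb c"
  by (simp add: onepD_def emb_0)

lemma onepD_add:
  assumes f: "onepD_regular f" and g: "onepD_regular g"
  shows "P (\<lambda>w. f w + g w) z = P f z + P g z"
  using f g unfolding onepD_def dminus_add_fun[OF f g]
  by (simp add: onepD_regular_def dplus_add dminus_add emb_add algebra_simps)

lemma onepD_mult:
  assumes f: "onepD_regular f" and g: "onepD_regular g"
  shows "P (\<lambda>w. f w * g w) z = P f z * P g z"
proof -
  have df: "\<And>x. f differentiable at x" "\<And>x. dminus f differentiable at x"
    and dg: "\<And>x. g differentiable at x" "\<And>x. dminus g differentiable at x"
    using f g by (auto simp: onepD_regular_def)
  have mixed: "dplus (dminus (\<lambda>w. f w * g w)) z =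
     (dplus (dminus f) z * g z + dminus f z * dplus g z)
     + (dplus f z * dminus g z + f z * dplus (dminus g) z)"
    unfolding dminus_mult_fun[OF f g]
    by (subst dplus_add) (auto intro!: differentiable_mult simp: df dg dplus_mult)
  show ?thesis
    unfolding onepD_def mixed dplus_mult[OF df(1) dg(1)] dminus_mult[OF df(1) dg(1)]
      emb_add emb_mult
    by (rule truncated_leibniz_identity[OF t1_nil t2_nil emb_i_squared, symmetric])
qed

lemma onepD_sum:
  "finite S \<Longrightarrow> (\<And>i. i \<in> S \<Longrightarrow> onepD_regular (h i)) \<Longrightarrow>
   P (\<lambda>w. \<Sum>i\<in>S. h i w) z = (\<Sum>i\<in>S. P (h i) z)"
proof (induction S rule: finite_induct)
  case empty
  show ?case using onepD_const by (simp add: emb_0)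
next
  case (insert x S)
  have "P (\<lambda>w. \<Sum>i\<in>insert x S. h i w) z = P (\<lambda>w. h x w + (\<Sum>i\<in>S. h i w)) z"
    using insert.hyps by simp
  also have "\<dots> = P (h x) z + P (\<lambda>w. \<Sum>i\<in>S. h i w) z"
    using insert.prems onepD_regular_sum[OF insert.hyps(1), of h]
    by (intro onepD_add) simp_all
  finally show ?case
    using insert by simp
qed

lemma onepD_prod:
  "finite S \<Longrightarrow> (\<And>i. i \<in> S \<Longrightarrow> onepD_regular (h i)) \<Longrightarrow>
   P (\<lambda>w. \<Prod>i\<in>S. h i w) z = (\<Prod>i\<in>S. P (h i) z)"
proof (induction S rule: finite_induct)
  case empty
  show ?case using onepD_const by (simp add: emb_1)
next
  case (insert x S)
  have "P (\<lambda>w. \<Prod>i\<in>insert x S. h i w) z = P (\<lambda>w. h x w * (\<Prod>i\<in>S. h i w)) z"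
    using insert.hyps by simp
  also have "\<dots> = P (h x) z * P (\<lambda>w. \<Prod>i\<in>S. h i w) z"
    using insert.prems onepD_regular_prod[OF insert.hyps(1), of h]
    by (intro onepD_mult) simp_all
  finally show ?case
    using insert by simp
qed

lemma onepD_det:
  fixes B :: "complex \<Rightarrow> complex ^ 'n ^ 'n"
  assumes regular_B: "\<And>j k. onepD_regular (\<lambda>w. B w $ j $ k)"
  shows "P (\<lambda>w. det (B w)) z = det (\<chi> j k. P (\<lambda>w. B w $ j $ k) z)"
proof -
  have regular_diag: "onepD_regular (\<lambda>w. \<Prod>i\<in>UNIV. B w $ i $ p i)" for p :: "'n \<Rightarrow> 'n"
    by (rule onepD_regular_prod) (auto intro: regular_B)
  have signed_diag: "P (\<lambda>w. of_int (sign p) * (\<Prod>i\<in>UNIV. B w $ i $ p i)) z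
      = of_int (sign p) * (\<Prod>i\<in>UNIV. P (\<lambda>w. B w $ i $ p i) z)" for p :: "'n \<Rightarrow> 'n"
    unfolding onepD_mult[OF onepD_regular_const regular_diag] onepD_const emb_of_int
    by (simp add: onepD_prod regular_B)
  have "P (\<lambda>w. det (B w)) z
      = (\<Sum>p\<in>{p. p permutes UNIV}. P (\<lambda>w. of_int (sign p) * (\<Prod>i\<in>UNIV. B w $ i $ p i)) z)"
    unfolding det_def
    by (rule onepD_sum) (auto intro: onepD_regular_mult onepD_regular_const regular_diag)
  also have "\<dots> = det (\<chi> j k. P (\<lambda>w. B w $ j $ k) z)"
    unfolding signed_diag det_def by simp
  finally show ?thesis .
qed

end

theorem lemma1:
  fixes emb :: "complex \<Rightarrow> 'a::comm_ring_1"
    and T1 T2 :: "complex \<Rightarrow> 'a"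
    and B :: "complex \<Rightarrow> complex ^ 'n ^ 'n"
  assumes emb_1: "emb 1 = 1"
    and emb_add: "\<And>a b. emb (a + b) = emb a + emb b"
    and emb_mult: "\<And>a b. emb (a * b) = emb a * emb b"
    and T1_nil: "\<And>w. T1 w * T1 w = 0"
    and T2_nil: "\<And>w. T2 w * T2 w = 0"
    and smooth_B: "\<And>j k. smooth (\<lambda>w. B w $ j $ k)"
  shows "det (\<chi> j k. onepD emb (T1 z) (T2 (cnj z)) (\<lambda>w. B w $ j $ k) z)
         = onepD emb (T1 z) (T2 (cnj z)) (\<lambda>w. det (B w)) z"
proof -
  interpret grassmann_even_data emb "T1 z" "T2 (cnj z)"
    using emb_1 emb_add emb_mult T1_nil T2_nil by unfold_locales
  show ?thesis
    by (rule onepD_det[symmetric]) (rule smooth_imp_onepD_regular[OF smooth_B])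
qed

end
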